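(* Let $d\ge2$ and let $\eta$ be a distribution on the nonnegative integers with finite mean, and consider the frog model on $\mathbb{T}_d$ with sleeping-frog distribution $\eta$. For $n\ge0$ let $F_n$ be the set of frogs awake at time $n$, and for a frog $f$ let $|f|$ be its distance from the root at time $n$. Set $\theta=\tfrac12\log\big((\mathbf{E}\eta+1)d\big)$, $m=\frac{2\sqrt{(\mathbf{E}\eta+1)d}}{d+1}$ and \[ W_n=\sum_{f\in F_n}e^{-\theta|f|}. \] Then for every $n\ge0$, $\mathbf{E}[W_{n+1}\mid\mathcal{F}_n]\le mW_n$, where $\mathcal{F}_n$ is the $\sigma$-field generated by the process up to time $n$. Consequently $W_n/m^n$ is a nonnegative supermartingale.
   Context: Let $d\ge 2$ and let $\mathbb{T}_d$ be the infinite rooted $d$-ary tree: every vertex has exactly $d$ children, so the root $\varnothing$ has degree $d$ and every other vertex has degree $d+1$. The frog model on $\mathbb{T}_d$ with sleeping-frog distribution $\eta$ (a law on the nonnegative integers) is defined as follows. Initially there is one awake frog at the root, and at each non-root vertex there is an independent $\eta$-distributed number of sleeping frogs. Time is discrete; at each step every awake frog takes one step of its own independent simple random walk (moves to a uniformly random neighbor). When a vertex holding sleeping frogs is visited for the first time by an awake frog, all frogs sleeping there wake up and from then on perform their own independent simple random walks (frogs woken at time $n+1$ belong to $F_{n+1}$). *)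

theory Defs
  imports "HOL-Probability.Probability"
begin

text \<open>Vertices of the infinite rooted d-ary tree: finite lists of child indices
  (each < d), the most recent step first.  The root is [], the children of v are
  i # v (i < d), the parent of a non-root v is tl v, and the distance of v from
  the root is length v.\<close>

definition tree_nbrs :: "nat \<Rightarrow> nat list \<Rightarrow> nat list set" where
  "tree_nbrs d v = (if v = [] then {} else {tl v}) \<union> (\<lambda>i. i # v) ` {..<d}"

fun frog_moves :: "nat \<Rightarrow> nat list list \<Rightarrow> nat list list pmf" where
  "frog_moves d [] = return_pmf []"
| "frog_moves d (v # vs) =
     bind_pmf (pmf_of_set (tree_nbrs d v)) (\<lambda>w.
     bind_pmf (frog_moves d vs) (\<lambda>ws. return_pmf (w # ws)))"

text \<open>Waking the sleeping frogs at newly visited vertices: each such vertex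
  carries an independent eta-distributed number of frogs (sampled lazily, when
  first visited).\<close>
fun frog_wake :: "nat pmf \<Rightarrow> nat list list \<Rightarrow> nat list list pmf" where
  "frog_wake \<eta> [] = return_pmf []"
| "frog_wake \<eta> (v # vs) =
     bind_pmf \<eta> (\<lambda>k. bind_pmf (frog_wake \<eta> vs) (\<lambda>r. return_pmf (replicate k v @ r)))"

text \<open>State: (positions of the awake frogs, set of visited vertices).\<close>
type_synonym frog_state = "nat list list \<times> nat list set"

definition frog_init :: frog_state where
  "frog_init = ([[]], {[]})"

definition frog_step :: "nat \<Rightarrow> nat pmf \<Rightarrow> frog_state \<Rightarrow> frog_state pmf" where
  "frog_step d \<eta> s =
     bind_pmf (frog_moves d (fst s)) (\<lambda>fs'.
     bind_pmf (frog_wake \<eta> (remdups (filter (\<lambda>w. w \<notin> snd s) fs'))) (\<lambda>ws.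
     return_pmf (fs' @ ws, snd s \<union> set fs')))"

text \<open>Law of the history (state at times 0..n) of the frog model.\<close>
primrec frog_hist :: "nat \<Rightarrow> nat pmf \<Rightarrow> nat \<Rightarrow> frog_state list pmf" where
  "frog_hist d \<eta> 0 = return_pmf [frog_init]"
| "frog_hist d \<eta> (Suc n) =
     bind_pmf (frog_hist d \<eta> n) (\<lambda>h. map_pmf (\<lambda>s. h @ [s]) (frog_step d \<eta> (last h)))"

definition mean_eta :: "nat pmf \<Rightarrow> real" where
  "mean_eta \<eta> = measure_pmf.expectation \<eta> real"

definition frog_theta :: "nat \<Rightarrow> nat pmf \<Rightarrow> real" where
  "frog_theta d \<eta> = ln ((mean_eta \<eta> + 1) * real d) / 2"

definition frog_m :: "nat \<Rightarrow> nat pmf \<Rightarrow> real" where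
  "frog_m d \<eta> = 2 * sqrt ((mean_eta \<eta> + 1) * real d) / (real d + 1)"

definition frog_W :: "nat \<Rightarrow> nat pmf \<Rightarrow> frog_state \<Rightarrow> real" where
  "frog_W d \<eta> s = sum_list (map (\<lambda>v. exp (- frog_theta d \<eta> * real (length v))) (fst s))"

end

theory Submission
  imports Defs
begin

text \<open>Let E be the mean of \<open>\<eta>\<close> and a = e^\<open>\<theta>\<close> = sqrt((E+1)d), so a frog at distance k from the
  root has weight a^-k. In one step a frog at v moves to a uniform neighbour w; its own weight
  becomes a^-|w|, and if w was never visited it wakes on average E frogs of the same weight. The
  visited set contains every awake frog and is closed under taking parents, so the parent of v
  hides no sleeping frogs and contributes a * a^-|v|, while the d children contribute at most
  d(E+1) a^-(|v|+1) = a * a^-|v|. Averaging over the d+1 neighbours (the d children at the root)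
  gives the factor m = 2a/(d+1). Frogs move and wake independently, so the expected weight after
  a step is at most m times the current one; conditioning the history on its first n+1 states
  just replaces the last step by a step from the current state.\<close>

lemma cond_pmf_bind_append:
  fixes q :: "'a list pmf"
  assumes len: "\<And>h0. h0 \<in> set_pmf q \<Longrightarrow> length h0 = L" and h: "h \<in> set_pmf q"
  shows "cond_pmf (bind_pmf q (\<lambda>h0. map_pmf (\<lambda>s. h0 @ [s]) (K h0))) {h'. take L h' = h}
         = map_pmf (\<lambda>s. h @ [s]) (K h)"
proof -
  define p where "p = bind_pmf q (\<lambda>h0. map_pmf (\<lambda>s. h0 @ [s]) (K h0))"
  define A where "A = {h'. take L h' = h}"
  define M where "M = (\<lambda>h0. map_pmf (\<lambda>s. h0 @ [s]) (K h0))"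
  have preimage: "(\<lambda>s. h0 @ [s]) -` A = (if h0 = h then UNIV else {})" if "h0 \<in> set_pmf q" for h0
    using len[OF that] by (auto simp: A_def)
  have "emeasure (measure_pmf p) A = (\<integral>\<^sup>+h0. emeasure (M h0) A \<partial>q)"
    by (simp add: p_def M_def)
  also have "\<dots> = (\<integral>\<^sup>+h0. indicator {h} h0 \<partial>q)"
    by (intro nn_integral_cong_AE AE_pmfI)
      (simp add: M_def emeasure_distr preimage measure_pmf.emeasure_space_1 map_pmf_rep_eq)
  finally have measure_A: "measure p A = pmf q h"
    by (simp add: emeasure_pmf_single measure_pmf.emeasure_eq_measure measure_pmf_single)
  have pos: "pmf q h \<noteq> 0" using h by (simp add: set_pmf_iff)
  have nonempty: "set_pmf p \<inter> A \<noteq> {}"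
    using measure_A pos measure_pmf_zero_iff[of p A] by auto
  have pmf_p: "pmf p x = pmf q h * pmf (M h) x" if "x \<in> A" for x
  proof -
    have only_h: "pmf (M h0) x = (if h0 = h then pmf (M h) x else 0)" if "h0 \<in> set_pmf q" for h0
      using len[OF that] \<open>x \<in> A\<close> by (auto simp: M_def A_def pmf_eq_0_set_pmf)
    have "ennreal (pmf p x) = (\<integral>\<^sup>+h0. pmf (M h0) x \<partial>q)"
      by (simp add: p_def M_def ennreal_pmf_bind)
    also have "\<dots> = (\<integral>\<^sup>+h0. ennreal (pmf (M h) x) * indicator {h} h0 \<partial>q)"
      by (intro nn_integral_cong_AE AE_pmfI) (simp add: only_h split: split_indicator)
    also have "\<dots> = ennreal (pmf (M h) x) * pmf q h"
      by (simp add: nn_integral_cmult_indicator emeasure_pmf_single)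
    finally show ?thesis by (simp add: ennreal_mult[symmetric] mult.commute)
  qed
  have "set_pmf (M h) \<subseteq> A" by (auto simp: M_def A_def len[OF h])
  then have "cond_pmf p A = M h"
    by (intro pmf_eqI) (auto simp: pmf_cond[OF nonempty] pmf_p measure_A pos set_pmf_eq)
  then show ?thesis by (simp add: p_def A_def M_def)
qed

lemma finite_tree_nbrs: "finite (tree_nbrs d v)"
  by (simp add: tree_nbrs_def)

lemma tree_nbrs_nonempty: "d \<ge> 1 \<Longrightarrow> tree_nbrs d v \<noteq> {}"
  by (auto simp: tree_nbrs_def lessThan_empty_iff)

lemma set_pmf_frog_moves:
  "d \<ge> 1 \<Longrightarrow> ws \<in> set_pmf (frog_moves d fs) \<Longrightarrow> list_all2 (\<lambda>v w. w \<in> tree_nbrs d v) fs ws"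
  by (induction fs arbitrary: ws) (auto simp: finite_tree_nbrs tree_nbrs_nonempty)

lemma set_pmf_frog_wake: "ws \<in> set_pmf (frog_wake \<eta> L) \<Longrightarrow> set ws \<subseteq> set L"
  by (induction L arbitrary: ws) fastforce+

definition frog_invariant :: "frog_state \<Rightarrow> bool" where
  "frog_invariant s \<longleftrightarrow> (\<forall>v\<in>snd s. v \<noteq> [] \<longrightarrow> tl v \<in> snd s) \<and> set (fst s) \<subseteq> snd s"

lemma frog_invariant_step:
  assumes d: "d \<ge> 1" and inv: "frog_invariant (fs, S)" and s': "s' \<in> set_pmf (frog_step d \<eta> (fs, S))"
  shows "frog_invariant s'"
proof -
  from s' obtain fs' ws where fs': "fs' \<in> set_pmf (frog_moves d fs)"
    and ws: "ws \<in> set_pmf (frog_wake \<eta> (remdups (filter (\<lambda>w. w \<notin> S) fs')))"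
    and s'_eq: "s' = (fs' @ ws, S \<union> set fs')"
    by (auto simp: frog_step_def)
  have moves: "list_all2 (\<lambda>v w. w \<in> tree_nbrs d v) fs fs'"
    using set_pmf_frog_moves[OF d fs'] .
  have closed: "tl w \<in> S \<union> set fs'" if w: "w \<in> set fs'" "w \<noteq> []" for w
  proof -
    obtain v where v: "v \<in> set fs" "w \<in> tree_nbrs d v"
      using moves w(1) by (metis in_set_conv_nth list_all2_conv_all_nth nth_mem)
    have "v \<in> S" using v(1) inv by (auto simp: frog_invariant_def)
    show ?thesis
    proof (cases "v \<noteq> [] \<and> w = tl v")
      case True
      then show ?thesis using \<open>v \<in> S\<close> w(2) inv by (simp add: frog_invariant_def)
    next
      case False
      then show ?thesis using \<open>v \<in> S\<close> v(2) by (auto simp: tree_nbrs_def split: if_splits)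
    qed
  qed
  then show ?thesis
    using inv set_pmf_frog_wake[OF ws] by (auto simp: frog_invariant_def s'_eq)
qed

lemma set_pmf_frog_hist:
  assumes "d \<ge> 1" and "h \<in> set_pmf (frog_hist d \<eta> n)"
  shows "length h = Suc n \<and> frog_invariant (last h)"
  using assms(2)
proof (induction n arbitrary: h)
  case 0
  then show ?case by (auto simp: frog_init_def frog_invariant_def)
next
  case (Suc n)
  then obtain h0 s where h0: "h0 \<in> set_pmf (frog_hist d \<eta> n)"
    and s: "s \<in> set_pmf (frog_step d \<eta> (last h0))" and h: "h = h0 @ [s]"
    by auto
  have "frog_invariant s"
    using frog_invariant_step[OF assms(1)] Suc.IH[OF h0] s by (metis prod.collapse)
  then show ?case using Suc.IH[OF h0] h by simp
qed

lemma cond_frog_hist: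
  assumes "d \<ge> 1" and "h \<in> set_pmf (frog_hist d \<eta> n)"
  shows "cond_pmf (frog_hist d \<eta> (Suc n)) {h'. take (Suc n) h' = h}
         = map_pmf (\<lambda>s. h @ [s]) (frog_step d \<eta> (last h))"
  unfolding frog_hist.simps
  by (rule cond_pmf_bind_append[where K = "\<lambda>h0. frog_step d \<eta> (last h0)"])
    (use set_pmf_frog_hist[OF assms(1)] assms(2) in auto)

lemma sum_list_map_remdups_le:
  fixes g :: "'a \<Rightarrow> 'b::ordered_comm_monoid_add"
  shows "(\<And>x. g x \<ge> 0) \<Longrightarrow> sum_list (map g (remdups xs)) \<le> sum_list (map g xs)"
  by (induction xs) (simp_all add: add_increasing add_left_mono)

lemma mean_eta_nonneg: "mean_eta \<eta> \<ge> 0"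
  by (simp add: mean_eta_def)

lemma nn_integral_frog_wake:
  assumes int: "integrable (measure_pmf \<eta>) real" and g: "\<And>v. g v \<ge> 0"
  shows "(\<integral>\<^sup>+ws. ennreal (sum_list (map g ws)) \<partial>frog_wake \<eta> L) = ennreal (mean_eta \<eta> * sum_list (map g L))"
proof (induction L)
  case Nil
  then show ?case by simp
next
  case (Cons v vs)
  have mean: "(\<integral>\<^sup>+k. ennreal (real k) \<partial>\<eta>) = ennreal (mean_eta \<eta>)"
    unfolding mean_eta_def by (rule nn_integral_eq_integral) (use int in auto)
  have g_sum: "sum_list (map g xs) \<ge> 0" for xs
    using g by (auto intro!: sum_list_nonneg)
  have "(\<integral>\<^sup>+ws. ennreal (sum_list (map g ws)) \<partial>frog_wake \<eta> (v # vs))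
     = (\<integral>\<^sup>+k. \<integral>\<^sup>+r. ennreal (real k * g v) + ennreal (sum_list (map g r)) \<partial>frog_wake \<eta> vs \<partial>\<eta>)"
    by (simp add: sum_list_replicate g g_sum ennreal_plus[symmetric] del: ennreal_plus)
  also have "\<dots> = (\<integral>\<^sup>+k. ennreal (real k * g v) + ennreal (mean_eta \<eta> * sum_list (map g vs)) \<partial>\<eta>)"
    by (simp add: nn_integral_add Cons measure_pmf.emeasure_space_1)
  also have "\<dots> = ennreal (g v) * ennreal (mean_eta \<eta>) + ennreal (mean_eta \<eta> * sum_list (map g vs))"
    by (simp add: nn_integral_add measure_pmf.emeasure_space_1 nn_integral_multc g ennreal_mult'
        mean mult.commute)
  also have "\<dots> = ennreal (mean_eta \<eta> * sum_list (map g (v # vs)))"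
    by (simp add: ennreal_mult'[symmetric] g g_sum mean_eta_nonneg ennreal_plus[symmetric]
        algebra_simps del: ennreal_plus)
  finally show ?case .
qed

lemma nn_integral_frog_moves_le:
  assumes c: "c \<ge> 0" and f: "\<And>w. f w \<ge> 0" and g: "\<And>v. g v \<ge> 0"
    and one: "\<And>v. v \<in> set fs \<Longrightarrow> (\<integral>\<^sup>+w. ennreal (f w) \<partial>pmf_of_set (tree_nbrs d v)) \<le> ennreal (c * g v)"
  shows "(\<integral>\<^sup>+ws. ennreal (sum_list (map f ws)) \<partial>frog_moves d fs) \<le> ennreal (c * sum_list (map g fs))"
  using one
proof (induction fs)
  case Nil
  then show ?case by simp
next
  case (Cons v vs)
  have sum_nonneg: "sum_list (map f xs) \<ge> 0" "sum_list (map g xs) \<ge> 0" for xs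
    using f g by (auto intro!: sum_list_nonneg)
  have "(\<integral>\<^sup>+ws. ennreal (sum_list (map f ws)) \<partial>frog_moves d (v # vs))
     = (\<integral>\<^sup>+w. \<integral>\<^sup>+ws. ennreal (f w) + ennreal (sum_list (map f ws)) \<partial>frog_moves d vs \<partial>pmf_of_set (tree_nbrs d v))"
    by (simp add: f sum_nonneg ennreal_plus[symmetric] del: ennreal_plus)
  also have "\<dots> = (\<integral>\<^sup>+w. ennreal (f w) \<partial>pmf_of_set (tree_nbrs d v))
                  + (\<integral>\<^sup>+ws. ennreal (sum_list (map f ws)) \<partial>frog_moves d vs)"
    by (simp add: nn_integral_add measure_pmf.emeasure_space_1)
  also have "\<dots> \<le> ennreal (c * g v) + ennreal (c * sum_list (map g vs))"
    using Cons by (intro add_mono) auto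
  also have "\<dots> = ennreal (c * sum_list (map g (v # vs)))"
    by (simp add: c g sum_nonneg ennreal_plus[symmetric] algebra_simps del: ennreal_plus)
  finally show ?case .
qed

text \<open>The expected total weight produced by a frog that steps onto \<open>w\<close>: its own, plus that of
  the \<open>E\<close> frogs it wakes on average if \<open>w\<close> was not yet visited.\<close>

definition landing_weight :: "real \<Rightarrow> (nat list \<Rightarrow> real) \<Rightarrow> nat list set \<Rightarrow> nat list \<Rightarrow> real" where
  "landing_weight E g S w = (if w \<in> S then g w else (1 + E) * g w)"

lemma landing_weight_nonneg: "E \<ge> 0 \<Longrightarrow> g w \<ge> 0 \<Longrightarrow> landing_weight E g S w \<ge> 0"
  by (simp add: landing_weight_def)

lemma nn_integral_frog_step_le:
  assumes int: "integrable (measure_pmf \<eta>) real" and c: "c \<ge> 0" and g: "\<And>v. g v \<ge> 0"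
    and one: "\<And>v. v \<in> set fs \<Longrightarrow>
      (\<integral>\<^sup>+w. ennreal (landing_weight (mean_eta \<eta>) g S w) \<partial>pmf_of_set (tree_nbrs d v)) \<le> ennreal (c * g v)"
  shows "(\<integral>\<^sup>+s'. ennreal (sum_list (map g (fst s'))) \<partial>frog_step d \<eta> (fs, S))
         \<le> ennreal (c * sum_list (map g fs))"
proof -
  define E where "E = mean_eta \<eta>"
  have E: "E \<ge> 0" by (simp add: E_def mean_eta_nonneg)
  have sum_nonneg: "sum_list (map g xs) \<ge> 0" for xs
    using g by (auto intro!: sum_list_nonneg)
  define fresh where "fresh fs' = remdups (filter (\<lambda>w. w \<notin> S) fs')" for fs' :: "nat list list"
  have fresh_le: "E * sum_list (map g (fresh fs'))
      \<le> E * sum_list (map (\<lambda>w. if w \<in> S then 0 else g w) fs')" for fs'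
  proof -
    have "sum_list (map g (fresh fs')) \<le> sum_list (map g (filter (\<lambda>w. w \<notin> S) fs'))"
      unfolding fresh_def by (rule sum_list_map_remdups_le) (rule g)
    also have "\<dots> = sum_list (map (\<lambda>w. if w \<in> S then 0 else g w) fs')"
      by (induction fs') auto
    finally show ?thesis using E by (rule mult_left_mono)
  qed
  have landing: "sum_list (map (landing_weight E g S) fs')
      = sum_list (map g fs') + E * sum_list (map (\<lambda>w. if w \<in> S then 0 else g w) fs')" for fs'
    by (induction fs') (auto simp: landing_weight_def algebra_simps)
  have wake: "(\<integral>\<^sup>+ws. ennreal (sum_list (map g (fs' @ ws))) \<partial>frog_wake \<eta> (fresh fs'))
      \<le> ennreal (sum_list (map (landing_weight E g S) fs'))" for fs'
  proof -
    have "(\<integral>\<^sup>+ws. ennreal (sum_list (map g (fs' @ ws))) \<partial>frog_wake \<eta> (fresh fs'))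
        = (\<integral>\<^sup>+ws. ennreal (sum_list (map g fs')) + ennreal (sum_list (map g ws)) \<partial>frog_wake \<eta> (fresh fs'))"
      by (simp add: sum_nonneg ennreal_plus[symmetric] del: ennreal_plus)
    also have "\<dots> = ennreal (sum_list (map g fs') + E * sum_list (map g (fresh fs')))"
      by (simp add: nn_integral_add measure_pmf.emeasure_space_1 nn_integral_frog_wake[OF int g]
          E_def sum_nonneg mean_eta_nonneg)
    also have "\<dots> \<le> ennreal (sum_list (map (landing_weight E g S) fs'))"
      using fresh_le[of fs'] by (intro ennreal_leI) (simp add: landing)
    finally show ?thesis .
  qed
  have "(\<integral>\<^sup>+s'. ennreal (sum_list (map g (fst s'))) \<partial>frog_step d \<eta> (fs, S))
      = (\<integral>\<^sup>+fs'. \<integral>\<^sup>+ws. ennreal (sum_list (map g (fs' @ ws)))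
            \<partial>frog_wake \<eta> (fresh fs') \<partial>frog_moves d fs)"
    by (simp add: frog_step_def fresh_def del: map_append)
  also have "\<dots> \<le> (\<integral>\<^sup>+fs'. ennreal (sum_list (map (landing_weight E g S) fs')) \<partial>frog_moves d fs)"
    by (intro nn_integral_mono wake)
  also have "\<dots> \<le> ennreal (c * sum_list (map g fs))"
    using one by (intro nn_integral_frog_moves_le c g landing_weight_nonneg E) (simp_all add: E_def)
  finally show ?thesis .
qed

lemma sum_tree_nbrs:
  "sum f (tree_nbrs d v) = (\<Sum>i<d. f (i # v)) + (if v = [] then 0 else f (tl v))"
proof -
  have inj: "inj_on (\<lambda>i. i # v) {..<d}" by (auto simp: inj_on_def)
  have "tl v \<notin> (\<lambda>i. i # v) ` {..<d}"
    by (auto dest: arg_cong[of _ _ length])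
  with inj show ?thesis
    by (cases "v = []") (simp_all add: tree_nbrs_def sum.reindex add.commute)
qed

lemma card_tree_nbrs: "card (tree_nbrs d v) = (if v = [] then d else d + 1)"
  unfolding card_eq_sum sum_tree_nbrs by simp

lemma sum_children_landing_weight_le:
  assumes E: "E \<ge> 0" and a: "a > 0" and a_sq: "a\<^sup>2 = (E + 1) * real d"
  shows "(\<Sum>i<d. landing_weight E (\<lambda>w. inverse a ^ length w) S (i # v)) \<le> a * inverse a ^ length v"
proof -
  have "(\<Sum>i<d. landing_weight E (\<lambda>w. inverse a ^ length w) S (i # v))
      \<le> (\<Sum>i<d. (E + 1) * inverse a ^ Suc (length v))"
    using E a by (intro sum_mono) (simp add: landing_weight_def)
  also have "\<dots> = a\<^sup>2 * inverse a * inverse a ^ length v"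
    by (simp add: a_sq algebra_simps)
  also have "\<dots> = a * inverse a ^ length v"
    using a by (simp add: power2_eq_square)
  finally show ?thesis .
qed

lemma nn_integral_landing_weight_le:
  assumes d: "d \<ge> 1" and E: "E \<ge> 0" and a: "a > 0" and a_sq: "a\<^sup>2 = (E + 1) * real d"
    and parent: "v \<noteq> [] \<Longrightarrow> tl v \<in> S"
  shows "(\<integral>\<^sup>+w. ennreal (landing_weight E (\<lambda>w. inverse a ^ length w) S w) \<partial>pmf_of_set (tree_nbrs d v))
         \<le> ennreal (2 * a / (real d + 1) * inverse a ^ length v)"
proof -
  define f where "f = landing_weight E (\<lambda>w. inverse a ^ length w) S"
  have children: "(\<Sum>i<d. f (i # v)) \<le> a * inverse a ^ length v"
    unfolding f_def using E a a_sq by (rule sum_children_landing_weight_le)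
  have average: "sum f (tree_nbrs d v) / card (tree_nbrs d v) \<le> 2 * a / (real d + 1) * inverse a ^ length v"
  proof (cases "v = []")
    case True
    have "sum f (tree_nbrs d v) / card (tree_nbrs d v) \<le> a / real d"
      using children d True by (simp add: sum_tree_nbrs card_tree_nbrs divide_right_mono)
    also have "\<dots> \<le> 2 * a / (real d + 1)"
      using d a by (simp add: field_simps)
    finally show ?thesis using True by simp
  next
    case False
    have "f (tl v) = inverse a ^ (length v - 1)"
      using parent[OF False] by (simp add: f_def landing_weight_def)
    also have "\<dots> = a * inverse a ^ length v"
      using False a by (cases v) simp_all
    finally have "sum f (tree_nbrs d v) \<le> 2 * a * inverse a ^ length v"
      using children False by (simp add: sum_tree_nbrs)
    then show ?thesis
      using False by (simp add: card_tree_nbrs divide_right_mono add.commute)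
  qed
  have f_nonneg: "f w \<ge> 0" for w
    using E a by (simp add: f_def landing_weight_nonneg)
  have "(\<integral>\<^sup>+w. ennreal (f w) \<partial>pmf_of_set (tree_nbrs d v))
      = ennreal (sum f (tree_nbrs d v) / card (tree_nbrs d v))"
    using d f_nonneg finite_tree_nbrs tree_nbrs_nonempty
    by (simp add: nn_integral_pmf_of_set sum_ennreal ennreal_of_nat_eq_real_of_nat divide_ennreal
        card_gt_0_iff sum_nonneg)
  also have "\<dots> \<le> ennreal (2 * a / (real d + 1) * inverse a ^ length v)"
    using average by (rule ennreal_leI)
  finally show ?thesis by (simp add: f_def)
qed

lemma exp_frog_theta:
  assumes "d \<ge> 1"
  shows "exp (frog_theta d \<eta>) = sqrt ((mean_eta \<eta> + 1) * real d)"
proof -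
  have pos: "(mean_eta \<eta> + 1) * real d > 0"
    using assms mean_eta_nonneg[of \<eta>] by simp
  have "exp (frog_theta d \<eta>) = sqrt (exp (2 * frog_theta d \<eta>))"
    by (simp only: exp_double real_sqrt_abs) simp
  then show ?thesis
    using pos by (simp add: frog_theta_def)
qed

lemma frog_W_eq_sum_inverse_power:
  assumes "d \<ge> 1"
  shows "frog_W d \<eta> s = sum_list (map (\<lambda>v. inverse (sqrt ((mean_eta \<eta> + 1) * real d)) ^ length v) (fst s))"
  unfolding frog_W_def exp_frog_theta[OF assms, symmetric] exp_minus[symmetric] exp_of_nat_mult[symmetric]
  by (simp add: mult.commute)

lemma frog_W_nonneg: "frog_W d \<eta> s \<ge> 0"
  unfolding frog_W_def by (auto intro!: sum_list_nonneg)

lemma frog_m_nonneg: "frog_m d \<eta> \<ge> 0"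
  using mean_eta_nonneg[of \<eta>] by (simp add: frog_m_def)

lemma nn_integral_frog_step_W_le:
  assumes d: "d \<ge> 1" and int: "integrable (measure_pmf \<eta>) real" and inv: "frog_invariant s"
  shows "(\<integral>\<^sup>+s'. ennreal (frog_W d \<eta> s') \<partial>frog_step d \<eta> s) \<le> ennreal (frog_m d \<eta> * frog_W d \<eta> s)"
proof -
  obtain fs S where s: "s = (fs, S)" by (cases s)
  define E where "E = mean_eta \<eta>"
  define a where "a = sqrt ((E + 1) * real d)"
  have E: "E \<ge> 0" by (simp add: E_def mean_eta_nonneg)
  have a: "a > 0" using d E by (simp add: a_def)
  have a_sq: "a\<^sup>2 = (E + 1) * real d" using E by (simp add: a_def)
  have m: "frog_m d \<eta> = 2 * a / (real d + 1)" by (simp add: frog_m_def a_def E_def)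
  have W: "frog_W d \<eta> t = sum_list (map (\<lambda>v. inverse a ^ length v) (fst t))" for t
    using frog_W_eq_sum_inverse_power[OF d] by (simp add: a_def E_def)
  have "(\<integral>\<^sup>+s'. ennreal (sum_list (map (\<lambda>v. inverse a ^ length v) (fst s'))) \<partial>frog_step d \<eta> (fs, S))
      \<le> ennreal (2 * a / (real d + 1) * sum_list (map (\<lambda>v. inverse a ^ length v) fs))"
  proof (rule nn_integral_frog_step_le[OF int])
    fix v assume "v \<in> set fs"
    then have "v \<noteq> [] \<Longrightarrow> tl v \<in> S" using inv by (auto simp: frog_invariant_def s)
    then show "(\<integral>\<^sup>+w. ennreal (landing_weight (mean_eta \<eta>) (\<lambda>w. inverse a ^ length w) S w)
                \<partial>pmf_of_set (tree_nbrs d v)) \<le> ennreal (2 * a / (real d + 1) * inverse a ^ length v)"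
      using nn_integral_landing_weight_le[OF d E a a_sq] by (simp add: E_def)
  qed (use a in auto)
  then show ?thesis by (simp add: W m s)
qed

lemma nn_integral_frog_hist_W_le:
  assumes d: "d \<ge> 1" and int: "integrable (measure_pmf \<eta>) real"
  shows "(\<integral>\<^sup>+h. ennreal (frog_W d \<eta> (last h)) \<partial>frog_hist d \<eta> n) \<le> ennreal (frog_m d \<eta> ^ n)"
proof (induction n)
  case 0
  then show ?case by (simp add: frog_init_def frog_W_def)
next
  case (Suc n)
  have "(\<integral>\<^sup>+h. ennreal (frog_W d \<eta> (last h)) \<partial>frog_hist d \<eta> (Suc n))
      = (\<integral>\<^sup>+h. \<integral>\<^sup>+s. ennreal (frog_W d \<eta> s) \<partial>frog_step d \<eta> (last h) \<partial>frog_hist d \<eta> n)"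
    by simp
  also have "\<dots> \<le> (\<integral>\<^sup>+h. ennreal (frog_m d \<eta>) * ennreal (frog_W d \<eta> (last h)) \<partial>frog_hist d \<eta> n)"
    using nn_integral_frog_step_W_le[OF d int] set_pmf_frog_hist[OF d]
    by (intro nn_integral_mono_AE AE_pmfI) (simp add: ennreal_mult frog_m_nonneg frog_W_nonneg)
  also have "\<dots> \<le> ennreal (frog_m d \<eta>) * ennreal (frog_m d \<eta> ^ n)"
    using Suc by (simp add: nn_integral_cmult mult_left_mono)
  also have "\<dots> = ennreal (frog_m d \<eta> ^ Suc n)"
    by (simp add: ennreal_mult frog_m_nonneg)
  finally show ?case .
qed

theorem mainTheorem4:
  fixes d :: nat and \<eta> :: "nat pmf"
  assumes "d \<ge> 2" and "integrable (measure_pmf \<eta>) real"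
  shows "(\<forall>n. \<forall>h \<in> set_pmf (frog_hist d \<eta> n).
           (\<integral>\<^sup>+ h'. ennreal (frog_W d \<eta> (last h'))
               \<partial>(cond_pmf (frog_hist d \<eta> (Suc n)) {h'. take (Suc n) h' = h}))
           \<le> ennreal (frog_m d \<eta> * frog_W d \<eta> (last h))) \<and>
         (\<forall>n. (\<integral>\<^sup>+ h. ennreal (frog_W d \<eta> (last h) / frog_m d \<eta> ^ n) \<partial>(frog_hist d \<eta> n)) < \<infinity>)"
proof (intro conjI allI ballI)
  have d: "d \<ge> 1" using assms(1) by simp
  fix n h
  assume h: "h \<in> set_pmf (frog_hist d \<eta> n)"
  then have "cond_pmf (frog_hist d \<eta> (Suc n)) {h'. take (Suc n) h' = h}
      = map_pmf (\<lambda>s. h @ [s]) (frog_step d \<eta> (last h))"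
    by (rule cond_frog_hist[OF d])
  then show "(\<integral>\<^sup>+ h'. ennreal (frog_W d \<eta> (last h'))
               \<partial>(cond_pmf (frog_hist d \<eta> (Suc n)) {h'. take (Suc n) h' = h}))
           \<le> ennreal (frog_m d \<eta> * frog_W d \<eta> (last h))"
    using nn_integral_frog_step_W_le[OF d assms(2)] set_pmf_frog_hist[OF d h] by simp
next
  have d: "d \<ge> 1" using assms(1) by simp
  fix n
  have "(\<integral>\<^sup>+ h. ennreal (frog_W d \<eta> (last h) / frog_m d \<eta> ^ n) \<partial>(frog_hist d \<eta> n))
      = ennreal (1 / frog_m d \<eta> ^ n) * (\<integral>\<^sup>+ h. ennreal (frog_W d \<eta> (last h)) \<partial>(frog_hist d \<eta> n))"
    by (simp add: nn_integral_cmult[symmetric] ennreal_mult[symmetric] frog_m_nonneg frog_W_nonneg)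
  also have "\<dots> \<le> ennreal (1 / frog_m d \<eta> ^ n) * ennreal (frog_m d \<eta> ^ n)"
    using nn_integral_frog_hist_W_le[OF d assms(2)] by (rule mult_left_mono) simp
  also have "\<dots> < \<infinity>" by (simp add: ennreal_mult_less_top)
  finally show "(\<integral>\<^sup>+ h. ennreal (frog_W d \<eta> (last h) / frog_m d \<eta> ^ n) \<partial>(frog_hist d \<eta> n)) < \<infinity>" .
qed

end
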